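(* Fix integers $0\le k\le T$. Let $(\nu^k_l)_{k\le l\le T-1}$ be nonnegative numbers, let $n^k=(n^k_l)_{k\le l\le T}$ satisfy $n^k_k=0$ with independent Poisson increments $n^k_{l+1}-n^k_l$ of parameters $\nu^k_l$, independent of $\mathfrak{F}_k$, let $i^k_k\in\{-1,1\}$ be $\mathfrak{F}_k$-measurable, and let $i^k_l=-\mathbf{1}_{i^k_k=-1}+\mathbf{1}_{i^k_k=1}(\mathbf{1}_{n^k_l=0}-\mathbf{1}_{n^k_l\ge1})$ for $k\le l\le T$. Define $$q_k=\sup_{\theta}\mathbb{E}_k\Big[\sum_{\ell=k+1}^{T}\big(\mathbf{1}_{i^k_\ell=-1}-\mathbf{1}_{i^k_\ell=1}\big)\mathbf{1}_{\ell\le\theta}\Big],$$ the supremum being over stopping times $\theta$ with values in $\{k,\dots,T\}$ with respect to the filtration generated by $\mathfrak{F}_k$ and $(i^k_l)_{k\le l\le T}$. Then $q_k=q^k(k,i^k_k)$, where $q^k:\{k,\dots,T\}\times\{1,-1\}\to\mathbb{R}$ is given by $q^k(T,\pm1)=0$ and, for $k\le l<T$, $$q^k(l,-1)=T-l,$$ $$q^k(l,1)=\max\Big(0,\;e^{-\nu^k_l}\big(-1+q^k(l+1,1)\big)+\big(1-e^{-\nu^k_l}\big)\big(1+q^k(l+1,-1)\big)\Big).$$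
   Context: $\mathfrak{F}=(\mathfrak{F}_k)_{0\le k\le T}$ is a filtration on the underlying probability space and $\mathbb{E}_k$ is conditional expectation given $\mathfrak{F}_k$. $q_k$ is the value of the stylized callable range accrual (receiving $+1$ at each date $\ell$ with $i^k_\ell=-1$, paying $1$ at each date with $i^k_\ell=1$, callable at zero value) in the trader's model set up at time $k$. *)

theory Defs
  imports "HOL-Probability.Probability"
begin

definition regime :: "('a \<Rightarrow> int) \<Rightarrow> (nat \<Rightarrow> 'a \<Rightarrow> int) \<Rightarrow> nat \<Rightarrow> 'a \<Rightarrow> int" where
  "regime ik n l \<omega> =
     - (if ik \<omega> = -1 then 1 else 0)
     + (if ik \<omega> = 1 then ((if n l \<omega> = 0 then 1 else 0) - (if n l \<omega> \<ge> 1 then 1 else 0)) else 0)"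

definition gen_filt :: "'a measure \<Rightarrow> 'a measure \<Rightarrow> nat \<Rightarrow> (nat \<Rightarrow> 'a \<Rightarrow> int) \<Rightarrow> nat \<Rightarrow> 'a measure" where
  "gen_filt M Fk k i l =
     sigma (space M) (sets Fk \<union> (\<Union>m\<in>{k..l}. {i m -` A \<inter> space M | A. A \<subseteq> (UNIV :: int set)}))"

definition payoff :: "nat \<Rightarrow> nat \<Rightarrow> (nat \<Rightarrow> 'a \<Rightarrow> int) \<Rightarrow> ('a \<Rightarrow> nat) \<Rightarrow> 'a \<Rightarrow> real" where
  "payoff k T i \<theta> \<omega> =
     (\<Sum>m\<in>{k+1..T}. ((if i m \<omega> = -1 then 1 else 0) - (if i m \<omega> = 1 then 1 else 0))
                     * (if m \<le> \<theta> \<omega> then 1 else 0))"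

definition is_ess_sup :: "'a measure \<Rightarrow> ('j \<Rightarrow> 'a \<Rightarrow> real) \<Rightarrow> 'j set \<Rightarrow> ('a \<Rightarrow> real) \<Rightarrow> bool" where
  "is_ess_sup M X I Q \<longleftrightarrow>
     Q \<in> borel_measurable M \<and>
     (\<forall>j\<in>I. AE \<omega> in M. X j \<omega> \<le> Q \<omega>) \<and>
     (\<forall>Y \<in> borel_measurable M. (\<forall>j\<in>I. AE \<omega> in M. X j \<omega> \<le> Y \<omega>) \<longrightarrow> (AE \<omega> in M. Q \<omega> \<le> Y \<omega>))"

text \<open>The function q^k, indexed by d = T - l (number of remaining dates):
  qaux nu T d b = q^k(T - d, b).\<close>
fun qaux :: "(nat \<Rightarrow> real) \<Rightarrow> nat \<Rightarrow> nat \<Rightarrow> int \<Rightarrow> real" where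
  "qaux \<nu> T 0 b = 0"
| "qaux \<nu> T (Suc d) b =
     (if b = -1 then real (Suc d)
      else max 0 (exp (- \<nu> (T - Suc d)) * (-1 + qaux \<nu> T d 1)
                  + (1 - exp (- \<nu> (T - Suc d))) * (1 + qaux \<nu> T d (-1))))"

definition qfun :: "(nat \<Rightarrow> real) \<Rightarrow> nat \<Rightarrow> nat \<Rightarrow> int \<Rightarrow> real" where
  "qfun \<nu> T l b = qaux \<nu> T (T - l) b"

end

theory Submission
  imports Defs
begin

(* The regime is absorbed in -1 and leaves 1 at the first jump of the Poisson counter n. The
   increment n (l+1) - n l is independent of F_k and of the earlier increments, hence of the
   information G l generated by F_k and the regimes up to date l. So, given G l, the next regime
   is 1 with probability exp (-nu l) if the current one is 1, and -1 otherwise, and q satisfies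
   the Bellman equation q(l,b) = max(0, E[coupon + q(l+1, next regime) | current regime b]).
   Backward induction on l then gives, for every stopping time theta and every B in G l on which
   theta >= l, that the integral of the remaining payoff over B is at most that of q(l, i l), with
   equality for the first date at which q(l, i l) vanishes. For l = k and B in F_k this says that
   q(k, i k) dominates every conditional expectation of the payoff and is attained. *)

lemma (in prob_space) prob_Int_indep_sigma_sets:
  assumes indep: "indep_sets F I" and stable: "\<And>i. i \<in> I \<Longrightarrow> Int_stable (F i)"
    and "J \<subseteq> I" "j \<in> I" "j \<notin> J"
    and a: "a \<in> sigma_sets (space M) (\<Union>i\<in>J. F i)" and b: "b \<in> F j"
  shows "prob (a \<inter> b) = prob a * prob b"
proof -
  define K where "K = case_bool J {j}"
  have "indep_sets F (\<Union>c. K c)"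
    by (rule indep_sets_mono_index[OF _ indep]) (use assms in \<open>auto simp: K_def split: bool.splits\<close>)
  moreover have "disjoint_family_on K UNIV"
    using \<open>j \<notin> J\<close> by (auto simp: K_def disjoint_family_on_def split: bool.splits)
  ultimately have "indep_sets (\<lambda>c. sigma_sets (space M) (\<Union>i\<in>K c. F i)) UNIV"
    using assms by (intro indep_sets_collect_sigma) (auto simp: K_def split: bool.splits)
  then have "indep_set (sigma_sets (space M) (\<Union>i\<in>J. F i)) (sigma_sets (space M) (F j))"
    unfolding indep_set_def by (rule indep_sets_cong[THEN iffD1, rotated 2]) (auto simp: K_def split: bool.splits)
  from indep_setD[OF this a sigma_sets.Basic[OF b]] show ?thesis .
qed

lemma (in prob_space) AE_nonneg_poisson:
  fixes X :: "'a \<Rightarrow> int"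
  assumes X: "X \<in> measurable M (count_space UNIV)"
    and law: "\<And>j. prob {\<omega> \<in> space M. X \<omega> = int j} = rate ^ j / fact j * exp (- rate)"
  shows "AE \<omega> in M. 0 \<le> X \<omega>"
proof -
  define A where "A j = {\<omega> \<in> space M. X \<omega> = int j}" for j
  have "(\<Union>j. A j) = {\<omega> \<in> space M. 0 \<le> X \<omega>}"
    by (auto simp: A_def intro: nonneg_int_cases)
  moreover have "(\<lambda>j. prob (A j)) sums prob (\<Union>j. A j)"
    using X by (intro finite_measure_UNION) (auto simp: A_def disjoint_family_on_def)
  moreover have "(\<lambda>j. (rate ^ j /\<^sub>R fact j) * exp (- rate)) sums (exp rate * exp (- rate))"
    by (intro sums_mult2 exp_converges)
  then have "(\<lambda>j. prob (A j)) sums 1"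
    by (simp add: A_def law exp_minus_inverse divide_inverse_commute)
  ultimately have "prob {\<omega> \<in> space M. 0 \<le> X \<omega>} = 1"
    using sums_unique2 by metis
  from AE_prob_1[OF this] show ?thesis
    by (rule eventually_mono) simp
qed

lemma (in finite_measure) integral_indicator_lincomb:
  assumes "A \<in> sets M" "B \<in> sets M"
  shows "(\<integral>x. a * indicator A x + b * indicator B x \<partial>M) = a * measure M A + b * measure M B"
  using assms by (subst Bochner_Integration.integral_add) (auto intro: integrable_real_indicator simp: emeasure_eq_measure)

lemma (in sigma_finite_subalgebra) real_cond_exp_le_of_set_integral_le:
  assumes f: "integrable M f" and g: "integrable M g" "g \<in> borel_measurable F"
    and le: "\<And>A. A \<in> sets F \<Longrightarrow> (\<integral>x\<in>A. f x \<partial>M) \<le> (\<integral>x\<in>A. g x \<partial>M)"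
  shows "AE x in M. real_cond_exp M F f x \<le> g x"
proof -
  let ?Z = "real_cond_exp M F f"
  define A where "A = {x \<in> space M. g x < ?Z x}"
  have "space F = space M"
    using subalg by (simp add: subalgebra_def)
  have [measurable]: "?Z \<in> borel_measurable F"
    by (rule borel_measurable_cond_exp)
  have A_F: "A \<in> sets F"
    unfolding A_def \<open>space F = space M\<close>[symmetric] using g(2) by measurable
  then have A_M: "A \<in> sets M"
    using subalg by (auto simp: subalgebra_def)
  have Z: "integrable M ?Z"
    using f by (rule real_cond_exp_int(1))
  have int_Z: "integrable M (\<lambda>x. indicator A x * ?Z x)" and int_g: "integrable M (\<lambda>x. indicator A x * g x)"
    using integrable_mult_indicator[OF A_M Z] integrable_mult_indicator[OF A_M g(1)] by simp_all
  have diff_int: "integrable M (\<lambda>x. indicator A x * (?Z x - g x))"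
    using Bochner_Integration.integrable_diff[OF int_Z int_g] by (simp add: right_diff_distrib)
  have "(\<integral>x. indicator A x * (?Z x - g x) \<partial>M) = (\<integral>x\<in>A. ?Z x \<partial>M) - (\<integral>x\<in>A. g x \<partial>M)"
    using Bochner_Integration.integral_diff[OF int_Z int_g]
    by (simp add: set_lebesgue_integral_def right_diff_distrib)
  also have "\<dots> \<le> 0"
    using le[OF A_F] real_cond_exp_intA[OF f A_F] by simp
  finally have "(\<integral>x. indicator A x * (?Z x - g x) \<partial>M) = 0"
    by (intro antisym integral_nonneg_AE) (auto simp: A_def indicator_def)
  then have "AE x in M. indicator A x * (?Z x - g x) = 0"
    using diff_int by (subst (asm) integral_nonneg_eq_0_iff_AE) (auto simp: A_def indicator_def)
  with AE_space show ?thesis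
    by eventually_elim (auto simp: A_def indicator_def)
qed

lemma is_ess_sup_attained:
  assumes "Q \<in> borel_measurable M" and "\<And>j. j \<in> I \<Longrightarrow> AE \<omega> in M. X j \<omega> \<le> Q \<omega>"
    and "j\<^sub>0 \<in> I" and "AE \<omega> in M. X j\<^sub>0 \<omega> = Q \<omega>"
  shows "is_ess_sup M X I Q"
  unfolding is_ess_sup_def
proof (intro conjI ballI allI impI)
  fix Y assume "\<forall>j\<in>I. AE \<omega> in M. X j \<omega> \<le> Y \<omega>"
  with assms(3) have "AE \<omega> in M. X j\<^sub>0 \<omega> \<le> Y \<omega>" by blast
  with assms(4) show "AE \<omega> in M. Q \<omega> \<le> Y \<omega>" by eventually_elim simp
qed (use assms in auto)

definition coupon :: "int \<Rightarrow> real" where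
  "coupon b = (if b = -1 then 1 else 0) - (if b = 1 then 1 else 0)"

(* Conditional expectation of g at the next date given the current regime b, where p is the
   probability that the counter does not jump in between. *)
definition expect_next :: "real \<Rightarrow> (int \<Rightarrow> real) \<Rightarrow> int \<Rightarrow> real" where
  "expect_next p g b = (if b = -1 then g (-1) else p * g 1 + (1 - p) * g (-1))"

lemma payoff_eq_sum_coupon:
  "payoff l T i \<theta> \<omega> = (\<Sum>m\<in>{Suc l..T}. coupon (i m \<omega>) * (if m \<le> \<theta> \<omega> then 1 else 0))"
  by (simp add: payoff_def coupon_def)

lemma payoff_stopped: "\<theta> \<omega> \<le> l \<Longrightarrow> payoff l T i \<theta> \<omega> = 0"
  unfolding payoff_def by (intro sum.neutral) auto

lemma payoff_Suc:
  "l < T \<Longrightarrow> l < \<theta> \<omega> \<Longrightarrow> payoff l T i \<theta> \<omega> = coupon (i (Suc l) \<omega>) + payoff (Suc l) T i \<theta> \<omega>"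
  unfolding payoff_eq_sum_coupon by (subst sum.atLeast_Suc_atMost) auto

lemma abs_payoff_le: "\<bar>payoff l T i \<theta> \<omega>\<bar> \<le> real T"
proof -
  have "\<bar>payoff l T i \<theta> \<omega>\<bar> \<le> (\<Sum>m\<in>{Suc l..T}. \<bar>coupon (i m \<omega>) * (if m \<le> \<theta> \<omega> then 1 else 0)\<bar>)"
    unfolding payoff_eq_sum_coupon by (rule sum_abs)
  also have "\<dots> \<le> (\<Sum>m\<in>{Suc l..T}. 1)"
    by (intro sum_mono) (auto simp: coupon_def)
  finally show ?thesis by simp
qed

lemma qfun_end [simp]: "qfun \<nu> T T b = 0"
  by (simp add: qfun_def)

lemma qfun_nonneg: "0 \<le> qfun \<nu> T l b"
  unfolding qfun_def by (cases "T - l") auto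

lemma qfun_minus_one: "l \<le> T \<Longrightarrow> qfun \<nu> T l (-1) = real (T - l)"
  unfolding qfun_def by (cases "T - l") auto

lemma qfun_Bellman:
  assumes "l < T"
  shows "qfun \<nu> T l b = max 0 (expect_next (exp (- \<nu> l)) (\<lambda>c. coupon c + qfun \<nu> T (Suc l) c) b)"
proof -
  have "T - l = Suc (T - Suc l)" and "T - Suc (T - Suc l) = l"
    using assms by auto
  then show ?thesis
    using qfun_minus_one[of "Suc l" T \<nu>] assms
    by (simp add: qfun_def expect_next_def coupon_def of_nat_diff algebra_simps)
qed

lemma regime_range: "regime ik n l \<omega> \<in> {-1, 0, 1}"
  by (simp add: regime_def)

lemma regime_start: "ik \<omega> \<in> {-1, 1} \<Longrightarrow> n l \<omega> = 0 \<Longrightarrow> regime ik n l \<omega> = ik \<omega>"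
  by (auto simp: regime_def)

lemma regime_pm1: "ik \<omega> \<in> {-1, 1} \<Longrightarrow> 0 \<le> n l \<omega> \<Longrightarrow> regime ik n l \<omega> \<in> {-1, 1}"
  by (auto simp: regime_def)

lemma regime_Suc:
  assumes "ik \<omega> \<in> {-1, 1}" "0 \<le> n l \<omega>" "n l \<omega> \<le> n (Suc l) \<omega>"
  shows "regime ik n (Suc l) \<omega> = (if regime ik n l \<omega> = 1 \<and> n (Suc l) \<omega> = n l \<omega> then 1 else -1)"
  using assms by (auto simp: regime_def)

locale regime_model = prob_space M for M :: "'a measure" +
  fixes Fk :: "'a measure" and k T :: nat
    and \<nu> :: "nat \<Rightarrow> real" and n :: "nat \<Rightarrow> 'a \<Rightarrow> int" and ik :: "'a \<Rightarrow> int"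
  assumes subalg: "subalgebra M Fk"
    and k_le_T: "k \<le> T"
    and n_measurable: "\<And>l. k \<le> l \<Longrightarrow> l \<le> T \<Longrightarrow> n l \<in> measurable M (count_space UNIV)"
    and n_start: "\<And>\<omega>. \<omega> \<in> space M \<Longrightarrow> n k \<omega> = 0"
    and increment_law: "\<And>l j. k \<le> l \<Longrightarrow> l < T \<Longrightarrow>
           prob {\<omega> \<in> space M. n (Suc l) \<omega> - n l \<omega> = int j} = \<nu> l ^ j / fact j * exp (- \<nu> l)"
    and increments_indep: "indep_sets
           (\<lambda>j. case j of None \<Rightarrow> sets Fk
                 | Some l \<Rightarrow> {(\<lambda>\<omega>. n (Suc l) \<omega> - n l \<omega>) -` A \<inter> space M | A. A \<subseteq> (UNIV :: int set)})
           (insert None (Some ` {k..<T}))"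
    and ik_measurable: "ik \<in> measurable Fk (count_space UNIV)"
    and ik_values: "\<And>\<omega>. \<omega> \<in> space M \<Longrightarrow> ik \<omega> \<in> {-1, 1}"
begin

abbreviation "i \<equiv> regime ik n"
abbreviation "G \<equiv> gen_filt M Fk k i"
abbreviation "q \<equiv> qfun \<nu> T"
abbreviation "incr l \<omega> \<equiv> n (Suc l) \<omega> - n l \<omega>"
abbreviation "indep_family j \<equiv> (case j of None \<Rightarrow> sets Fk
                 | Some l \<Rightarrow> {(\<lambda>\<omega>. n (Suc l) \<omega> - n l \<omega>) -` A \<inter> space M | A. A \<subseteq> (UNIV :: int set)})"

lemma space_Fk: "space Fk = space M" and sets_Fk: "sets Fk \<subseteq> sets M"
  using subalg by (auto simp: subalgebra_def)

definition generators :: "nat \<Rightarrow> 'a set set" where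
  "generators l = sets Fk \<union> (\<Union>m\<in>{k..l}. {i m -` A \<inter> space M | A. A \<subseteq> (UNIV :: int set)})"

lemma G_eq_sigma: "G l = sigma (space M) (generators l)"
  by (simp add: gen_filt_def generators_def)

lemma space_G [simp]: "space (G l) = space M"
  by (simp add: G_eq_sigma space_measure_of_conv)

lemma sets_G: "sets (G l) = sigma_sets (space M) (generators l)"
proof -
  have "generators l \<subseteq> Pow (space M)"
    using sets.sets_into_space[of _ Fk] by (auto simp: generators_def space_Fk)
  then show ?thesis
    by (simp add: G_eq_sigma)
qed

lemma filtration_G: "filtration (space M) G"
proof
  fix l l' :: nat assume "l \<le> l'"
  then have "generators l \<subseteq> generators l'"
    unfolding generators_def by (intro Un_mono UN_mono) auto
  then show "sets (G l) \<subseteq> sets (G l')"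
    unfolding sets_G by (rule sigma_sets_subseteq)
qed simp

lemma sets_Fk_subset_G: "sets Fk \<subseteq> sets (G l)"
  using sigma_sets_superset_generator[of "generators l" "space M"] by (auto simp: sets_G generators_def)

lemma regime_measurable_G:
  assumes "k \<le> m" "m \<le> l"
  shows "i m \<in> measurable (G l) (count_space UNIV)"
  unfolding measurable_count_space_eq2_countable
proof (intro conjI ballI)
  fix a
  have "i m -` {a} \<inter> space M \<in> generators l"
    unfolding generators_def using assms by (intro UnI2 UN_I[of m]) auto
  then show "i m -` {a} \<inter> space (G l) \<in> sets (G l)"
    by (simp add: sets_G sigma_sets.Basic)
qed simp

lemma regime_measurable_of_increments:
  assumes ik: "ik \<in> measurable N (count_space UNIV)" and "space N = space M"
    and incr: "\<And>j. k \<le> j \<Longrightarrow> j < m \<Longrightarrow> incr j \<in> measurable N (count_space UNIV)"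
    and "k \<le> m"
  shows "i m \<in> measurable N (count_space UNIV)"
proof -
  have "n m \<in> measurable N (count_space UNIV)"
    using \<open>k \<le> m\<close> incr
  proof (induction m rule: dec_induct)
    case base
    show ?case
      by (rule measurable_cong[THEN iffD1, of _ "\<lambda>_. 0"]) (auto simp: \<open>space N = space M\<close> n_start)
  next
    case (step m)
    then have [measurable]: "n m \<in> measurable N (count_space UNIV)" "incr m \<in> measurable N (count_space UNIV)"
      by auto
    have "(\<lambda>\<omega>. n m \<omega> + incr m \<omega>) \<in> measurable N (count_space UNIV)"
      by measurable
    then show ?case by simp
  qed
  with ik show ?thesis
    unfolding regime_def by measurable
qed

lemma increment_measurable: "k \<le> j \<Longrightarrow> j < T \<Longrightarrow> incr j \<in> measurable M (count_space UNIV)"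
  using n_measurable[of j] n_measurable[of "Suc j"] by measurable

lemma regime_measurable: "k \<le> m \<Longrightarrow> m \<le> T \<Longrightarrow> i m \<in> measurable M (count_space UNIV)"
  using measurable_from_subalg[OF subalg ik_measurable]
  by (rule regime_measurable_of_increments) (auto intro: increment_measurable)

lemma subalgebra_G: "l \<le> T \<Longrightarrow> subalgebra M (G l)"
proof -
  assume "l \<le> T"
  then have "generators l \<subseteq> sets M"
    using sets_Fk measurable_sets[OF regime_measurable] by (auto simp: generators_def)
  then show ?thesis
    by (simp add: subalgebra_def sets_G sets.sigma_sets_subset)
qed

definition past :: "nat \<Rightarrow> 'a measure" where
  "past l = sigma (space M) (\<Union>j\<in>insert None (Some ` {k..<l}). indep_family j)"

lemma space_past [simp]: "space (past l) = space M"
  and sets_past: "sets (past l) = sigma_sets (space M) (\<Union>j\<in>insert None (Some ` {k..<l}). indep_family j)"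
proof -
  have "(\<Union>j\<in>insert None (Some ` {k..<l}). indep_family j) \<subseteq> Pow (space M)"
    using sets_Fk sets.space_closed[of M] by (fastforce split: option.splits)
  then show "space (past l) = space M" "sets (past l) = sigma_sets (space M) (\<Union>j\<in>insert None (Some ` {k..<l}). indep_family j)"
    by (simp_all add: past_def space_measure_of_conv)
qed

lemma indep_family_subset_past: "j \<in> insert None (Some ` {k..<l}) \<Longrightarrow> indep_family j \<subseteq> sets (past l)"
  unfolding sets_past by (rule order_trans[OF _ sigma_sets_superset_generator]) blast

lemma regime_measurable_past:
  assumes "k \<le> m" "m \<le> l"
  shows "i m \<in> measurable (past l) (count_space UNIV)"
proof (rule regime_measurable_of_increments[OF _ space_past _ assms(1)])
  show "ik \<in> measurable (past l) (count_space UNIV)"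
    using measurable_sets[OF ik_measurable] indep_family_subset_past[of None l]
    by (auto simp: measurable_count_space_eq2_countable space_Fk)
  fix j assume "k \<le> j" "j < m"
  moreover have "incr j -` {a} \<inter> space M \<in> indep_family (Some j)" for a
    by auto
  ultimately show "incr j \<in> measurable (past l) (count_space UNIV)"
    using indep_family_subset_past[of "Some j" l] assms by (auto simp: measurable_count_space_eq2_countable)
qed

lemma sets_G_subset_past: "sets (G l) \<subseteq> sets (past l)"
proof -
  have "generators l \<subseteq> sets (past l)"
    unfolding generators_def
  proof (intro Un_least UN_least subsetI)
    show "x \<in> sets (past l)" if "x \<in> sets Fk" for x
      using that indep_family_subset_past[of None l] by auto
    fix m x assume "m \<in> {k..l}" and "x \<in> {i m -` A \<inter> space M | A. A \<subseteq> UNIV}"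
    then obtain A where "x = i m -` A \<inter> space M" and "k \<le> m" "m \<le> l"
      by auto
    then show "x \<in> sets (past l)"
      using measurable_sets[OF regime_measurable_past, of m l A] by simp
  qed
  then show ?thesis
    unfolding sets_G using sets.sigma_sets_subset'[of _ "past l"] sets.top[of "past l"] by simp
qed

lemma Int_stable_indep_family: "Int_stable (indep_family j)"
proof (cases j)
  case (Some l)
  show ?thesis
    unfolding Some Int_stable_def
  proof clarsimp
    fix A B :: "int set"
    have "incr l -` A \<inter> space M \<inter> (incr l -` B \<inter> space M) = incr l -` (A \<inter> B) \<inter> space M"
      by auto
    then show "\<exists>C. incr l -` A \<inter> space M \<inter> (incr l -` B \<inter> space M) = incr l -` C \<inter> space M"
      by blast
  qed
qed (auto simp: Int_stable_def)

lemma prob_Int_no_jump: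
  assumes "k \<le> l" "l < T" "B \<in> sets (G l)"
  shows "prob (B \<inter> {\<omega> \<in> space M. incr l \<omega> = 0}) = prob B * exp (- \<nu> l)"
proof -
  have past: "B \<in> sigma_sets (space M) (\<Union>j\<in>insert None (Some ` {k..<l}). indep_family j)"
    using assms(3) sets_G_subset_past sets_past by blast
  have "{\<omega> \<in> space M. incr l \<omega> = 0} = incr l -` {0} \<inter> space M"
    by auto
  then have jump: "{\<omega> \<in> space M. incr l \<omega> = 0} \<in> indep_family (Some l)"
    by auto
  have "prob (B \<inter> {\<omega> \<in> space M. incr l \<omega> = 0}) = prob B * prob {\<omega> \<in> space M. incr l \<omega> = 0}"
    using assms by (intro prob_Int_indep_sigma_sets[OF increments_indep Int_stable_indep_family _ _ _ past jump]) auto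
  then show ?thesis
    using increment_law[OF assms(1,2), of 0] by simp
qed

lemma AE_increments_nonneg: "AE \<omega> in M. \<forall>j\<in>{k..<T}. 0 \<le> incr j \<omega>"
proof (intro AE_finite_allI)
  fix j assume "j \<in> {k..<T}"
  then show "AE \<omega> in M. 0 \<le> incr j \<omega>"
    by (intro AE_nonneg_poisson[where rate="\<nu> j"] increment_measurable increment_law) auto
qed simp

lemma AE_regime_step:
  assumes "k \<le> l" "l < T"
  shows "AE \<omega> in M. i l \<omega> \<in> {-1, 1} \<and> i (Suc l) \<omega> = (if i l \<omega> = 1 \<and> incr l \<omega> = 0 then 1 else -1)"
  using AE_increments_nonneg AE_space
proof eventually_elim
  case (elim \<omega>)
  have nonneg: "0 \<le> n m \<omega>" if "k \<le> m" "m \<le> T" for m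
    using that
  proof (induction m rule: dec_induct)
    case base
    show ?case using n_start[OF elim(2)] by simp
  next
    case (step m)
    then have "0 \<le> n m \<omega>" "0 \<le> incr m \<omega>"
      using elim(1) by auto
    then show ?case by linarith
  qed
  have "0 \<le> n l \<omega>" "n l \<omega> \<le> n (Suc l) \<omega>"
    using nonneg elim(1) assms by auto
  with regime_pm1[of ik \<omega> n l] regime_Suc[of ik \<omega> n l] ik_values[OF elim(2)] show ?case
    by simp
qed

lemma integrable_indicator_regime:
  fixes g :: "int \<Rightarrow> real"
  assumes "B \<in> events" "k \<le> m" "m \<le> T"
  shows "integrable M (\<lambda>\<omega>. indicator B \<omega> * g (i m \<omega>))"
proof (rule integrable_const_bound[where B="\<bar>g (-1)\<bar> + \<bar>g 0\<bar> + \<bar>g 1\<bar>"])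
  show "AE \<omega> in M. norm (indicator B \<omega> * g (i m \<omega>)) \<le> \<bar>g (-1)\<bar> + \<bar>g 0\<bar> + \<bar>g 1\<bar>"
  proof (intro AE_I2)
    fix \<omega>
    show "norm (indicator B \<omega> * g (i m \<omega>)) \<le> \<bar>g (-1)\<bar> + \<bar>g 0\<bar> + \<bar>g 1\<bar>"
      using regime_range[of ik n m \<omega>] by (auto simp: indicator_def)
  qed
  have [measurable]: "i m \<in> measurable M (count_space UNIV)"
    using assms by (intro regime_measurable)
  show "(\<lambda>\<omega>. indicator B \<omega> * g (i m \<omega>)) \<in> borel_measurable M"
    using assms(1) by measurable
qed

lemma integral_next_regime:
  assumes "k \<le> l" "l < T" "B \<in> sets (G l)"
  shows "(\<integral>\<omega>. indicator B \<omega> * g (i (Suc l) \<omega>) \<partial>M)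
       = (\<integral>\<omega>. indicator B \<omega> * expect_next (exp (- \<nu> l)) g (i l \<omega>) \<partial>M)"
proof -
  define C where "C = B \<inter> {\<omega> \<in> space M. i l \<omega> = 1}"
  define no_jump where "no_jump = {\<omega> \<in> space M. incr l \<omega> = 0}"
  have "{\<omega> \<in> space M. i l \<omega> = 1} \<in> sets (G l)"
    using measurable_sets[OF regime_measurable_G[of l l], of "{1}"] assms(1)
    by (simp add: vimage_def Int_def conj_commute)
  with assms(3) have C_G: "C \<in> sets (G l)"
    unfolding C_def by (rule sets.Int)
  have B: "B \<in> events" and C: "C \<in> events"
    using assms C_G subalgebra_G[of l] by (auto simp: subalgebra_def)
  have no_jump: "no_jump \<in> events"
    using measurable_sets[OF increment_measurable[OF assms(1,2)], of "{0}"]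
    by (simp add: no_jump_def vimage_def Int_def conj_commute)
  have [measurable]: "i l \<in> measurable M (count_space UNIV)" "i (Suc l) \<in> measurable M (count_space UNIV)"
    using assms by (auto intro: regime_measurable)
  have "(\<integral>\<omega>. indicator B \<omega> * g (i (Suc l) \<omega>) \<partial>M)
      = (\<integral>\<omega>. g (-1) * indicator B \<omega> + (g 1 - g (-1)) * indicator (C \<inter> no_jump) \<omega> \<partial>M)"
  proof (rule integral_cong_AE)
    show "AE \<omega> in M. indicator B \<omega> * g (i (Suc l) \<omega>)
        = g (-1) * indicator B \<omega> + (g 1 - g (-1)) * indicator (C \<inter> no_jump) \<omega>"
      using AE_regime_step[OF assms(1,2)] AE_space
      by eventually_elim (auto simp: C_def no_jump_def indicator_def)
  qed (use B C no_jump in measurable)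
  also have "\<dots> = g (-1) * prob B + (g 1 - g (-1)) * (exp (- \<nu> l) * prob C)"
    using integral_indicator_lincomb[OF B sets.Int[OF C no_jump]] prob_Int_no_jump[OF assms(1,2) C_G]
    by (simp add: no_jump_def)
  also have "\<dots> = (\<integral>\<omega>. g (-1) * indicator B \<omega> + ((g 1 - g (-1)) * exp (- \<nu> l)) * indicator C \<omega> \<partial>M)"
    using B C by (simp add: integral_indicator_lincomb)
  also have "\<dots> = (\<integral>\<omega>. indicator B \<omega> * expect_next (exp (- \<nu> l)) g (i l \<omega>) \<partial>M)"
  proof (rule integral_cong_AE)
    show "AE \<omega> in M. g (-1) * indicator B \<omega> + ((g 1 - g (-1)) * exp (- \<nu> l)) * indicator C \<omega>
        = indicator B \<omega> * expect_next (exp (- \<nu> l)) g (i l \<omega>)"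
      using AE_regime_step[OF assms(1,2)] AE_space
      by eventually_elim (auto simp: C_def expect_next_def indicator_def algebra_simps)
  qed (use B C in measurable)
  finally show ?thesis .
qed

context
  fixes \<theta> :: "'a \<Rightarrow> nat"
  assumes stopping: "stopping_time G \<theta>"
begin

lemma pred_const_le_stopping_time: "m \<le> T \<Longrightarrow> Measurable.pred M (\<lambda>\<omega>. m \<le> \<theta> \<omega>)"
proof (cases m)
  case (Suc m')
  assume "m \<le> T"
  have "Measurable.pred (G m') (\<lambda>\<omega>. m' < \<theta> \<omega>)"
    using stopping by (rule stopping_timeD2)
  then have "Measurable.pred M (\<lambda>\<omega>. m' < \<theta> \<omega>)"
    using \<open>m \<le> T\<close> Suc by (intro measurable_from_subalg[OF subalgebra_G]) auto
  then show ?thesis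
    by (simp add: Suc Suc_le_eq)
qed simp

lemma payoff_measurable: "k \<le> l \<Longrightarrow> payoff l T i \<theta> \<in> borel_measurable M"
  unfolding payoff_eq_sum_coupon[abs_def]
proof (intro borel_measurable_sum)
  fix m assume "k \<le> l" "m \<in> {Suc l..T}"
  then have [measurable]: "i m \<in> measurable M (count_space UNIV)" "Measurable.pred M (\<lambda>\<omega>. m \<le> \<theta> \<omega>)"
    by (auto intro: regime_measurable pred_const_le_stopping_time)
  show "(\<lambda>\<omega>. coupon (i m \<omega>) * (if m \<le> \<theta> \<omega> then 1 else 0)) \<in> borel_measurable M"
    by measurable
qed

lemma integrable_payoff: "k \<le> l \<Longrightarrow> integrable M (payoff l T i \<theta>)"
  using abs_payoff_le by (intro integrable_const_bound[where B="real T"] AE_I2 payoff_measurable) auto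

lemma integrable_indicator_payoff:
  "B \<in> events \<Longrightarrow> k \<le> l \<Longrightarrow> integrable M (\<lambda>\<omega>. indicator B \<omega> * payoff l T i \<theta> \<omega>)"
  using integrable_mult_indicator[OF _ integrable_payoff] by simp

lemma continuation_set_G:
  "B \<in> sets (G l) \<Longrightarrow> B \<inter> {\<omega> \<in> space M. l < \<theta> \<omega>} \<in> sets (G l)"
  using stopping_timeD2[OF stopping, of l] by (auto simp: Measurable.pred_def)

lemma integral_payoff_step:
  assumes "k \<le> l" "l < T" "B \<in> sets (G l)" "\<forall>\<omega>\<in>B. l \<le> \<theta> \<omega>"
  defines "B' \<equiv> B \<inter> {\<omega> \<in> space M. l < \<theta> \<omega>}"
  shows "(\<integral>\<omega>. indicator B \<omega> * payoff l T i \<theta> \<omega> \<partial>M)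
       = (\<integral>\<omega>. indicator B' \<omega> * expect_next (exp (- \<nu> l)) (\<lambda>c. coupon c + q (Suc l) c) (i l \<omega>) \<partial>M)
         + ((\<integral>\<omega>. indicator B' \<omega> * payoff (Suc l) T i \<theta> \<omega> \<partial>M)
            - (\<integral>\<omega>. indicator B' \<omega> * q (Suc l) (i (Suc l) \<omega>) \<partial>M))"
proof -
  have B'_G: "B' \<in> sets (G l)"
    unfolding B'_def using assms(3) by (rule continuation_set_G)
  then have B': "B' \<in> events"
    using subalgebra_G[of l] assms(2) by (auto simp: subalgebra_def)
  have "B \<subseteq> space M"
    using sets.sets_into_space[OF assms(3)] by simp
  then have "indicator B \<omega> * payoff l T i \<theta> \<omega>
      = indicator B' \<omega> * coupon (i (Suc l) \<omega>) + indicator B' \<omega> * payoff (Suc l) T i \<theta> \<omega>" for \<omega>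
    using assms(2,4) payoff_Suc[of l T \<theta> \<omega> i] payoff_stopped[of \<theta> \<omega> l T i]
    by (cases "\<omega> \<in> B"; cases "l < \<theta> \<omega>") (auto simp: B'_def)
  then have "(\<integral>\<omega>. indicator B \<omega> * payoff l T i \<theta> \<omega> \<partial>M)
      = (\<integral>\<omega>. indicator B' \<omega> * coupon (i (Suc l) \<omega>) \<partial>M) + (\<integral>\<omega>. indicator B' \<omega> * payoff (Suc l) T i \<theta> \<omega> \<partial>M)"
    using B' assms(1,2)
    by (simp add: Bochner_Integration.integral_add integrable_indicator_regime integrable_indicator_payoff)
  moreover have "(\<integral>\<omega>. indicator B' \<omega> * coupon (i (Suc l) \<omega>) \<partial>M)
      = (\<integral>\<omega>. indicator B' \<omega> * (coupon (i (Suc l) \<omega>) + q (Suc l) (i (Suc l) \<omega>)) \<partial>M)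
        - (\<integral>\<omega>. indicator B' \<omega> * q (Suc l) (i (Suc l) \<omega>) \<partial>M)"
    using B' assms(1,2)
    by (simp add: distrib_left Bochner_Integration.integral_add integrable_indicator_regime)
  moreover have "(\<integral>\<omega>. indicator B' \<omega> * (coupon (i (Suc l) \<omega>) + q (Suc l) (i (Suc l) \<omega>)) \<partial>M)
      = (\<integral>\<omega>. indicator B' \<omega> * expect_next (exp (- \<nu> l)) (\<lambda>c. coupon c + q (Suc l) c) (i l \<omega>) \<partial>M)"
    using integral_next_regime[OF assms(1,2) B'_G, of "\<lambda>c. coupon c + q (Suc l) c"] by simp
  ultimately show ?thesis
    by simp
qed

lemma integral_payoff_le_value:
  assumes "l \<le> T" "k \<le> l" "B \<in> sets (G l)" "\<forall>\<omega>\<in>B. l \<le> \<theta> \<omega>"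
  shows "(\<integral>\<omega>. indicator B \<omega> * payoff l T i \<theta> \<omega> \<partial>M) \<le> (\<integral>\<omega>. indicator B \<omega> * q l (i l \<omega>) \<partial>M)"
  using assms
proof (induction l arbitrary: B rule: inc_induct)
  case base
  then show ?case by (simp add: payoff_def)
next
  case (step l)
  define B' where "B' = B \<inter> {\<omega> \<in> space M. l < \<theta> \<omega>}"
  have B'_G: "B' \<in> sets (G l)"
    unfolding B'_def using step.prems(2) by (rule continuation_set_G)
  then have "B' \<in> sets (G (Suc l))"
    using filtration.sets_F_mono[OF filtration_G, of l "Suc l"] by auto
  then have future: "(\<integral>\<omega>. indicator B' \<omega> * payoff (Suc l) T i \<theta> \<omega> \<partial>M)
      \<le> (\<integral>\<omega>. indicator B' \<omega> * q (Suc l) (i (Suc l) \<omega>) \<partial>M)"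
    using step by (intro step.IH) (auto simp: B'_def)
  have events: "B \<in> events" "B' \<in> events"
    using B'_G step subalgebra_G[of l] by (auto simp: subalgebra_def)
  have "(\<integral>\<omega>. indicator B' \<omega> * expect_next (exp (- \<nu> l)) (\<lambda>c. coupon c + q (Suc l) c) (i l \<omega>) \<partial>M)
      \<le> (\<integral>\<omega>. indicator B \<omega> * q l (i l \<omega>) \<partial>M)"
  proof (rule integral_mono)
    fix \<omega>
    show "indicator B' \<omega> * expect_next (exp (- \<nu> l)) (\<lambda>c. coupon c + q (Suc l) c) (i l \<omega>)
        \<le> indicator B \<omega> * q l (i l \<omega>)"
      using qfun_Bellman[OF step.hyps(2), of \<nu> "i l \<omega>"] qfun_nonneg[of \<nu> T l "i l \<omega>"]
      by (auto simp: B'_def indicator_def)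
  qed (use events step in \<open>auto intro: integrable_indicator_regime\<close>)
  with future show ?case
    using integral_payoff_step[OF step.prems(1) step.hyps(2) step.prems(2,3)] by (simp add: B'_def)
qed

end

definition optimal_stop :: "'a \<Rightarrow> nat" where
  "optimal_stop \<omega> = Inf {m. k \<le> m \<and> q m (i m \<omega>) = 0}"

lemma optimal_stop_le: "k \<le> m \<Longrightarrow> q m (i m \<omega>) = 0 \<Longrightarrow> optimal_stop \<omega> \<le> m"
  unfolding optimal_stop_def by (rule cInf_lower) auto

lemma optimal_stop_attained: "k \<le> optimal_stop \<omega> \<and> q (optimal_stop \<omega>) (i (optimal_stop \<omega>) \<omega>) = 0"
proof -
  have "T \<in> {m. k \<le> m \<and> q m (i m \<omega>) = 0}"
    using k_le_T by simp
  then show ?thesis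
    unfolding optimal_stop_def using Inf_nat_def1[of "{m. k \<le> m \<and> q m (i m \<omega>) = 0}"] by blast
qed

lemma optimal_stop_range: "optimal_stop \<omega> \<in> {k..T}"
  using optimal_stop_attained optimal_stop_le[OF k_le_T] by auto

lemma stopping_time_optimal_stop: "stopping_time G optimal_stop"
  unfolding optimal_stop_def[abs_def]
proof (rule stopping_time_Inf_nat[OF filtration_G])
  fix m
  show "Measurable.pred (G m) (\<lambda>\<omega>. k \<le> m \<and> q m (i m \<omega>) = 0)"
  proof (cases "k \<le> m")
    case True
    then have [measurable]: "i m \<in> measurable (G m) (count_space UNIV)"
      by (intro regime_measurable_G) auto
    show ?thesis by measurable
  qed simp
qed (use k_le_T in auto)

lemma integral_payoff_optimal:
  assumes "l \<le> T" "k \<le> l" "B \<in> sets (G l)" "\<forall>\<omega>\<in>B. l \<le> optimal_stop \<omega>"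
  shows "(\<integral>\<omega>. indicator B \<omega> * payoff l T i optimal_stop \<omega> \<partial>M) = (\<integral>\<omega>. indicator B \<omega> * q l (i l \<omega>) \<partial>M)"
  using assms
proof (induction l arbitrary: B rule: inc_induct)
  case base
  then show ?case by (simp add: payoff_def)
next
  case (step l)
  define B' where "B' = B \<inter> {\<omega> \<in> space M. l < optimal_stop \<omega>}"
  have "B' \<in> sets (G l)"
    unfolding B'_def using step.prems(2) by (rule continuation_set_G[OF stopping_time_optimal_stop])
  then have "B' \<in> sets (G (Suc l))"
    using filtration.sets_F_mono[OF filtration_G, of l "Suc l"] by auto
  then have future: "(\<integral>\<omega>. indicator B' \<omega> * payoff (Suc l) T i optimal_stop \<omega> \<partial>M)
      = (\<integral>\<omega>. indicator B' \<omega> * q (Suc l) (i (Suc l) \<omega>) \<partial>M)"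
    using step by (intro step.IH) (auto simp: B'_def)
  have "(\<integral>\<omega>. indicator B' \<omega> * expect_next (exp (- \<nu> l)) (\<lambda>c. coupon c + q (Suc l) c) (i l \<omega>) \<partial>M)
      = (\<integral>\<omega>. indicator B \<omega> * q l (i l \<omega>) \<partial>M)"
  proof (rule Bochner_Integration.integral_cong[OF refl])
    fix \<omega> assume "\<omega> \<in> space M"
    show "indicator B' \<omega> * expect_next (exp (- \<nu> l)) (\<lambda>c. coupon c + q (Suc l) c) (i l \<omega>)
        = indicator B \<omega> * q l (i l \<omega>)"
    proof (cases "\<omega> \<in> B'")
      case True
      then have "q l (i l \<omega>) \<noteq> 0"
        using optimal_stop_le[OF step.prems(1), of \<omega>] by (auto simp: B'_def)
      then show ?thesis
        using True qfun_Bellman[OF step.hyps(2), of \<nu> "i l \<omega>"] by (auto simp: B'_def max_def split: if_splits)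
    next
      case False
      show ?thesis
      proof (cases "\<omega> \<in> B")
        case True
        with False have "optimal_stop \<omega> = l"
          using step.prems(3) \<open>\<omega> \<in> space M\<close> by (force simp: B'_def)
        then have "q l (i l \<omega>) = 0"
          using optimal_stop_attained[of \<omega>] by simp
        with False show ?thesis by simp
      qed (use False in \<open>simp add: B'_def\<close>)
    qed
  qed
  with future show ?case
    using integral_payoff_step[OF stopping_time_optimal_stop step.prems(1) step.hyps(2) step.prems(2,3)]
    by (simp add: B'_def)
qed

lemma value_measurable: "(\<lambda>\<omega>. q k (ik \<omega>)) \<in> borel_measurable Fk"
  using ik_measurable by measurable

lemma integrable_value: "integrable M (\<lambda>\<omega>. q k (ik \<omega>))"
proof (rule integrable_const_bound[where B="\<bar>q k (-1)\<bar> + \<bar>q k 1\<bar>"])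
  show "AE \<omega> in M. norm (q k (ik \<omega>)) \<le> \<bar>q k (-1)\<bar> + \<bar>q k 1\<bar>"
  proof (intro AE_I2)
    fix \<omega> assume "\<omega> \<in> space M"
    then show "norm (q k (ik \<omega>)) \<le> \<bar>q k (-1)\<bar> + \<bar>q k 1\<bar>"
      using ik_values[of \<omega>] by auto
  qed
qed (rule measurable_from_subalg[OF subalg value_measurable])

lemma set_integral_value:
  assumes "A \<in> sets Fk"
  shows "(\<integral>\<omega>\<in>A. q k (ik \<omega>) \<partial>M) = (\<integral>\<omega>. indicator A \<omega> * q k (i k \<omega>) \<partial>M)"
  unfolding set_lebesgue_integral_def
  using regime_start[of ik _ n k] ik_values n_start by (intro Bochner_Integration.integral_cong) auto

lemma set_integral_payoff_le_value:
  assumes "stopping_time G \<theta>" "\<forall>\<omega>\<in>space M. k \<le> \<theta> \<omega>" "A \<in> sets Fk"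
  shows "(\<integral>\<omega>\<in>A. payoff k T i \<theta> \<omega> \<partial>M) \<le> (\<integral>\<omega>\<in>A. q k (ik \<omega>) \<partial>M)"
proof -
  have "A \<in> sets (G k)" "\<forall>\<omega>\<in>A. k \<le> \<theta> \<omega>"
    using assms(2,3) sets_Fk_subset_G sets.sets_into_space[OF assms(3)] by (auto simp: space_Fk)
  then show ?thesis
    unfolding set_integral_value[OF assms(3)]
    using integral_payoff_le_value[OF assms(1) k_le_T order_refl] by (simp add: set_lebesgue_integral_def)
qed

lemma set_integral_payoff_optimal:
  assumes "A \<in> sets Fk"
  shows "(\<integral>\<omega>\<in>A. payoff k T i optimal_stop \<omega> \<partial>M) = (\<integral>\<omega>\<in>A. q k (ik \<omega>) \<partial>M)"
proof -
  have "A \<in> sets (G k)"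
    using assms sets_Fk_subset_G by auto
  then show ?thesis
    unfolding set_integral_value[OF assms]
    using integral_payoff_optimal[OF k_le_T order_refl] optimal_stop_attained
    by (simp add: set_lebesgue_integral_def)
qed

theorem is_ess_sup_value:
  "is_ess_sup M (\<lambda>\<theta>. real_cond_exp M Fk (payoff k T i \<theta>))
     {\<theta>. stopping_time G \<theta> \<and> (\<forall>\<omega>\<in>space M. \<theta> \<omega> \<in> {k..T})} (\<lambda>\<omega>. q k (ik \<omega>))"
proof (rule is_ess_sup_attained)
  interpret finite_measure_subalgebra M Fk
    by unfold_locales (rule subalg)
  have payoff_int: "integrable M (payoff k T i \<theta>)" if "stopping_time G \<theta>" for \<theta>
    using integrable_payoff[OF that order_refl] .
  show "AE \<omega> in M. real_cond_exp M Fk (payoff k T i \<theta>) \<omega> \<le> q k (ik \<omega>)"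
    if "\<theta> \<in> {\<theta>. stopping_time G \<theta> \<and> (\<forall>\<omega>\<in>space M. \<theta> \<omega> \<in> {k..T})}" for \<theta>
    using that payoff_int integrable_value value_measurable set_integral_payoff_le_value
    by (intro real_cond_exp_le_of_set_integral_le) auto
  show "AE \<omega> in M. real_cond_exp M Fk (payoff k T i optimal_stop) \<omega> = q k (ik \<omega>)"
    using payoff_int[OF stopping_time_optimal_stop] integrable_value value_measurable
    by (intro real_cond_exp_charact set_integral_payoff_optimal)
qed (use optimal_stop_range in \<open>auto intro: measurable_from_subalg[OF subalg value_measurable] stopping_time_optimal_stop\<close>)

end

theorem lemma5p4:
  fixes M :: "'a measure" and Fk :: "'a measure" and k T :: nat
    and \<nu> :: "nat \<Rightarrow> real" and n :: "nat \<Rightarrow> 'a \<Rightarrow> int" and ik :: "'a \<Rightarrow> int"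
  assumes "prob_space M"
    and "subalgebra M Fk"
    and "k \<le> T"
    and "\<And>l. k \<le> l \<Longrightarrow> l < T \<Longrightarrow> \<nu> l \<ge> 0"
    and "\<And>l. k \<le> l \<Longrightarrow> l \<le> T \<Longrightarrow> n l \<in> measurable M (count_space UNIV)"
    and "\<And>\<omega>. \<omega> \<in> space M \<Longrightarrow> n k \<omega> = 0"
    and "\<And>l j. k \<le> l \<Longrightarrow> l < T \<Longrightarrow>
           measure M {\<omega> \<in> space M. n (Suc l) \<omega> - n l \<omega> = int j}
             = \<nu> l ^ j / fact j * exp (- \<nu> l)"
    and "prob_space.indep_sets M
           (\<lambda>j. case j of None \<Rightarrow> sets Fk
                 | Some l \<Rightarrow> {(\<lambda>\<omega>. n (Suc l) \<omega> - n l \<omega>) -` A \<inter> space M | A. A \<subseteq> (UNIV :: int set)})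
           (insert None (Some ` {k..<T}))"
    and "ik \<in> measurable Fk (count_space UNIV)"
    and "\<And>\<omega>. \<omega> \<in> space M \<Longrightarrow> ik \<omega> \<in> {-1, 1}"
  shows "is_ess_sup M
           (\<lambda>\<theta>. real_cond_exp M Fk (payoff k T (regime ik n) \<theta>))
           {\<theta>. stopping_time (gen_filt M Fk k (regime ik n)) \<theta>
                \<and> (\<forall>\<omega>\<in>space M. \<theta> \<omega> \<in> {k..T})}
           (\<lambda>\<omega>. qfun \<nu> T k (ik \<omega>))"
proof -
  interpret regime_model M Fk k T \<nu> n ik
    using assms by (simp add: regime_model_def regime_model_axioms_def)
  show ?thesis
    by (rule is_ess_sup_value)
qed

end
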